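(* Let $M=(C,A,B)$ with $C\in\mathbb{R}^{p\times n}$, $A\in\mathbb{R}^{n\times n}$, $B\in\mathbb{R}^{n\times m}$ and $\rho(A)<1$. For any integers $d_1\ge d_2\ge1$, $$\|\mathcal{H}_{0,\infty,\infty}-\bar{\mathcal{H}}_{0,d_1,d_1}\|_2\le\sqrt2\,\|\mathcal{H}_{0,\infty,\infty}-\bar{\mathcal{H}}_{0,d_2,d_2}\|_2 .$$
   Context: $\mathcal{H}_{k,a,b}$ is the block Hankel matrix whose $(i,j)$ block ($1\le i\le a$, $1\le j\le b$, $a=b=\infty$ allowed) is $CA^{k+i+j-2}B$. For a finite matrix $P$, $\bar P$ denotes $P$ padded with zeros to a doubly infinite matrix. Norms of infinite matrices are operator norms on $\ell^2$. *)

theory Defs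
  imports "HOL-Analysis.Analysis" "Jordan_Normal_Form.Spectral_Radius"
begin

text \<open>Infinite real matrices indexed by natural numbers (rows, columns), i.e. operators
  on the sequence space l2 given by their matrix entries.\<close>
type_synonym inf_mat = "nat \<Rightarrow> nat \<Rightarrow> real"

text \<open>Operator norm on l2: supremum of the l2 norm of M x over finitely supported
  x with l2 norm at most 1 (finitely supported vectors are dense in l2), where the l2
  norm of M x is itself the supremum of its partial sums over the first N rows.\<close>
definition l2_opnorm :: "inf_mat \<Rightarrow> real" where
  "l2_opnorm M = Sup { sqrt (\<Sum>i<N. (\<Sum>j\<in>F. M i j * x j)\<^sup>2) | N F x.
       finite F \<and> (\<Sum>j\<in>F. (x j)\<^sup>2) \<le> 1 }"

text \<open>Block Hankel matrix H_{k,a,b} with (i,j) block (1-based) C A^(k+i+j-2) B,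
  flattened to scalar entries; blocks are p x m.  Block rows/columns beyond a resp. b
  are zero (i.e. the padded version); the guard s < p, t < m only matters for
  degenerate dimensions p = 0 or m = 0 (empty matrix, all entries zero); a = None / b = None means infinitely many.\<close>
definition block_hankel ::
  "real mat \<Rightarrow> real mat \<Rightarrow> real mat \<Rightarrow> nat \<Rightarrow> nat option \<Rightarrow> nat option \<Rightarrow> inf_mat" where
  "block_hankel C A B k a b = (\<lambda>r c.
     let p = dim_row C; m = dim_col B;
         i = r div p; s = r mod p; j = c div m; t = c mod m in
     if s < p \<and> t < m \<and> (case a of None \<Rightarrow> True | Some a' \<Rightarrow> i < a') \<and>
        (case b of None \<Rightarrow> True | Some b' \<Rightarrow> j < b')
     then (C * A ^\<^sub>m (k + i + j) * B) $$ (s, t) else 0)"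

end

theory Submission
  imports Defs
begin

text \<open>Write \<open>T\<^sub>d\<close> for the tail \<open>H - H_d\<close> of the infinite Hankel matrix outside its
  leading \<open>d \<times> d\<close> block corner. For \<open>d\<^sub>2 \<le> d\<^sub>1\<close>, every row of \<open>T\<^sub>d\<^sub>1\<close> is either the
  corresponding row of \<open>T\<^sub>d\<^sub>2\<close> (block rows beyond \<open>d\<^sub>1\<close>) or that row with its first \<open>d\<^sub>1\<close> block
  columns set to zero. Hence \<open>|T\<^sub>d\<^sub>1 x|\<^sup>2 \<le> |T\<^sub>d\<^sub>2 x|\<^sup>2 + |T\<^sub>d\<^sub>2 x'|\<^sup>2\<close>, where \<open>x'\<close> is \<open>x\<close> with
  those columns removed, and both terms are at most \<open>|T\<^sub>d\<^sub>2|\<^sup>2\<close>.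
  The spectral radius hypothesis only ensures that \<open>|T\<^sub>d\<^sub>2|\<close> is finite (the supremum
  defining the norm is otherwise meaningless): the entries of \<open>A\<^sup>k\<close> decay like \<open>r\<^sup>k\<close> with \<open>r < 1\<close>,
  so the Hankel entries are dominated by a square-summable rank-one matrix.\<close>

lemma smult_mat_mult_vec:
  assumes "v \<in> carrier_vec (dim_col M)"
  shows "(c \<cdot>\<^sub>m M) *\<^sub>v v = (c :: 'a :: comm_ring_1) \<cdot>\<^sub>v (M *\<^sub>v v)"
  using assms by (auto intro!: eq_vecI simp: scalar_prod_def sum_distrib_left mult.assoc)

lemma eigenvector_smult_mat:
  fixes c :: "'a :: field"
  assumes "M \<in> carrier_mat n n" "c \<noteq> 0"
  shows "eigenvector (c \<cdot>\<^sub>m M) v (c * e) \<longleftrightarrow> eigenvector M v e"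
proof -
  have "c \<cdot>\<^sub>v (M *\<^sub>v v) = (c * e) \<cdot>\<^sub>v v \<longleftrightarrow> M *\<^sub>v v = e \<cdot>\<^sub>v v"
  proof
    assume "c \<cdot>\<^sub>v (M *\<^sub>v v) = (c * e) \<cdot>\<^sub>v v"
    then have "(1 / c) \<cdot>\<^sub>v (c \<cdot>\<^sub>v (M *\<^sub>v v)) = (1 / c) \<cdot>\<^sub>v ((c * e) \<cdot>\<^sub>v v)" by simp
    then show "M *\<^sub>v v = e \<cdot>\<^sub>v v" using assms by (simp add: smult_smult_assoc)
  qed (simp add: smult_smult_assoc)
  then show ?thesis using assms unfolding eigenvector_def by (auto simp: smult_mat_mult_vec)
qed

lemma spectrum_smult_mat:
  fixes c :: "'a :: field"
  assumes "M \<in> carrier_mat n n" "c \<noteq> 0"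
  shows "spectrum (c \<cdot>\<^sub>m M) = (\<lambda>e. c * e) ` spectrum M"
proof -
  have scaled: "c * e \<in> spectrum (c \<cdot>\<^sub>m M) \<longleftrightarrow> e \<in> spectrum M" for e
    using eigenvector_smult_mat[OF assms] unfolding spectrum_def eigenvalue_def by simp
  have "e \<in> spectrum (c \<cdot>\<^sub>m M) \<longleftrightarrow> e \<in> (\<lambda>e. c * e) ` spectrum M" for e
  proof
    assume "e \<in> spectrum (c \<cdot>\<^sub>m M)"
    then have "e / c \<in> spectrum M" using scaled[of "e / c"] assms(2) by simp
    moreover have "e = c * (e / c)" using assms(2) by simp
    ultimately show "e \<in> (\<lambda>e. c * e) ` spectrum M" by blast
  qed (use scaled in blast)
  then show ?thesis by blast
qed

lemma spectral_radius_smult_mat: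
  assumes "M \<in> carrier_mat n n" "0 < n" "c \<noteq> 0"
  shows "spectral_radius (c \<cdot>\<^sub>m M) = norm c * spectral_radius M"
proof -
  have "spectrum M \<noteq> {}" "finite (spectrum M)"
    using spectrum_non_empty[OF assms(1,2)] card_finite_spectrum[OF assms(1)] by auto
  then have "norm c * Max (norm ` spectrum M) = Max ((\<lambda>x. norm c * x) ` norm ` spectrum M)"
    by (intro hom_Max_commute) (auto simp: max_mult_distrib_left)
  then show ?thesis
    unfolding spectral_radius_def spectrum_smult_mat[OF assms(1,3)] image_image by (simp add: norm_mult)
qed

lemma smult_pow_mat:
  assumes "M \<in> carrier_mat n n"
  shows "(c \<cdot>\<^sub>m M) ^\<^sub>m k = (c ^ k :: 'a :: comm_ring_1) \<cdot>\<^sub>m (M ^\<^sub>m k)"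
proof (induction k)
  case 0
  then show ?case using assms by (auto intro!: eq_matI)
next
  case (Suc k)
  then show ?case
    using assms by (auto intro!: eq_matI simp: mult_smult_assoc_mat[of _ n n _ n] mult_smult_distrib[of _ n n _ n])
qed

text \<open>Rescale \<open>A\<close> by \<open>1 / r\<close> with \<open>spectral_radius A < r < 1\<close> and apply the Jordan normal form
  bound for matrices of spectral radius less than one.\<close>

lemma spectral_radius_less_1_geometric_bound:
  fixes A :: "complex mat"
  assumes A: "A \<in> carrier_mat n n" and radius: "spectral_radius A < 1"
  shows "\<exists>K r. 0 \<le> K \<and> 0 < r \<and> r < 1 \<and> (\<forall>k. norm_bound (A ^\<^sub>m k) (K * r ^ k))"
proof (cases "n = 0")
  case True
  then have "norm_bound (A ^\<^sub>m k) 0" for k using A by (auto simp: norm_bound_def)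
  then show ?thesis by (intro exI[of _ 0] exI[of _ "1/2"]) auto
next
  case False
  define r where "r = (spectral_radius A + 1) / 2"
  have "0 \<le> spectral_radius A" using spectral_radius_mem_max(1)[OF A] False by auto
  then have r: "0 < r" "r < 1" "spectral_radius A < r" using radius unfolding r_def by auto
  define M where "M = complex_of_real (1 / r) \<cdot>\<^sub>m A"
  have "spectral_radius M = spectral_radius A / r"
    unfolding M_def using A False r by (subst spectral_radius_smult_mat) (auto simp: norm_divide)
  then have "spectral_radius M < 1" using r by (simp add: divide_less_eq)
  then obtain K where K: "\<And>k. norm_bound (M ^\<^sub>m k) K"
    using spectral_radius_jnf_norm_bound_less_1_upper_triangular[of M n] A unfolding M_def by auto
  have "norm_bound (A ^\<^sub>m k) (max K 0 * r ^ k)" for k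
  proof
    fix i j assume "i < dim_row (A ^\<^sub>m k)" "j < dim_col (A ^\<^sub>m k)"
    then have ij: "i < n" "j < n" using A by (auto split: if_splits)
    have "M ^\<^sub>m k = complex_of_real ((1 / r) ^ k) \<cdot>\<^sub>m A ^\<^sub>m k"
      unfolding M_def smult_pow_mat[OF A] by simp
    then have "norm (complex_of_real ((1 / r) ^ k) * (A ^\<^sub>m k) $$ (i, j)) \<le> K"
      using K[of k] ij A unfolding norm_bound_def by auto
    then have "(1 / r) ^ k * norm ((A ^\<^sub>m k) $$ (i, j)) \<le> K"
      using r by (simp only: norm_mult norm_of_real abs_of_pos zero_less_power zero_less_divide_1_iff)
    then have "norm ((A ^\<^sub>m k) $$ (i, j)) \<le> K * r ^ k"
      using r by (simp add: field_simps power_divide)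
    also have "\<dots> \<le> max K 0 * r ^ k"
      using r by (intro mult_right_mono) auto
    finally show "norm ((A ^\<^sub>m k) $$ (i, j)) \<le> max K 0 * r ^ k" .
  qed
  then show ?thesis using r by (intro exI[of _ "max K 0"] exI[of _ r]) auto
qed

definition l2_opnorm_set :: "inf_mat \<Rightarrow> real set" where
  "l2_opnorm_set M = { sqrt (\<Sum>i<N. (\<Sum>j\<in>F. M i j * x j)\<^sup>2) | N F x.
       finite F \<and> (\<Sum>j\<in>F. (x j)\<^sup>2) \<le> 1 }"

lemma l2_opnorm_eq_Sup: "l2_opnorm M = Sup (l2_opnorm_set M)"
  unfolding l2_opnorm_def l2_opnorm_set_def ..

lemma zero_in_l2_opnorm_set: "0 \<in> l2_opnorm_set M"
  unfolding l2_opnorm_set_def by (intro CollectI exI[of _ 0] exI[of _ "{}"]) auto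

lemma l2_opnorm_nonneg: "bdd_above (l2_opnorm_set M) \<Longrightarrow> 0 \<le> l2_opnorm M"
  unfolding l2_opnorm_eq_Sup by (rule cSup_upper[OF zero_in_l2_opnorm_set])

lemma partial_l2_norm_le_l2_opnorm:
  assumes "bdd_above (l2_opnorm_set M)" "finite F" "(\<Sum>j\<in>F. (x j)\<^sup>2) \<le> 1"
  shows "(\<Sum>i<N. (\<Sum>j\<in>F. M i j * x j)\<^sup>2) \<le> (l2_opnorm M)\<^sup>2"
proof -
  let ?u = "\<Sum>i<N. (\<Sum>j\<in>F. M i j * x j)\<^sup>2"
  have u: "0 \<le> ?u" by (simp add: sum_nonneg)
  have "sqrt ?u \<in> l2_opnorm_set M" unfolding l2_opnorm_set_def using assms by blast
  then have "sqrt ?u \<le> l2_opnorm M" unfolding l2_opnorm_eq_Sup using assms(1) by (rule cSup_upper)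
  then have "(sqrt ?u)\<^sup>2 \<le> (l2_opnorm M)\<^sup>2" using u by (intro power_mono) auto
  then show ?thesis unfolding real_sqrt_pow2[OF u] .
qed

lemma bdd_above_l2_opnorm_set_rank_one_bound:
  fixes M :: inf_mat
  assumes M: "\<And>i j. \<bar>M i j\<bar> \<le> g i * h j" and g: "\<And>i. 0 \<le> g i"
    and g_sum: "\<And>N. (\<Sum>i<N. (g i)\<^sup>2) \<le> G"
    and h_sum: "\<And>F. finite F \<Longrightarrow> (\<Sum>j\<in>F. (h j)\<^sup>2) \<le> H"
  shows "bdd_above (l2_opnorm_set M)"
proof (rule bdd_aboveI)
  fix y assume "y \<in> l2_opnorm_set M"
  then obtain N F x where y: "y = sqrt (\<Sum>i<N. (\<Sum>j\<in>F. M i j * x j)\<^sup>2)"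
    and F: "finite F" and x: "(\<Sum>j\<in>F. (x j)\<^sup>2) \<le> 1" unfolding l2_opnorm_set_def by blast
  have H: "0 \<le> H" using h_sum[of "{}"] by simp
  have row: "(\<Sum>j\<in>F. M i j * x j)\<^sup>2 \<le> (g i)\<^sup>2 * H" for i
  proof -
    have "\<bar>\<Sum>j\<in>F. M i j * x j\<bar> \<le> (\<Sum>j\<in>F. (g i * h j) * \<bar>x j\<bar>)"
      by (rule order_trans[OF sum_abs]) (auto intro!: sum_mono mult_right_mono simp: abs_mult M)
    then have "(\<Sum>j\<in>F. M i j * x j)\<^sup>2 \<le> (\<Sum>j\<in>F. (g i * h j) * \<bar>x j\<bar>)\<^sup>2"
      by (metis abs_ge_zero power2_abs power_mono)
    also have "\<dots> = (g i)\<^sup>2 * (\<Sum>j\<in>F. h j * \<bar>x j\<bar>)\<^sup>2"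
      by (simp add: sum_distrib_left[symmetric] power_mult_distrib mult.assoc)
    also have "\<dots> \<le> (g i)\<^sup>2 * ((\<Sum>j\<in>F. (h j)\<^sup>2) * (\<Sum>j\<in>F. \<bar>x j\<bar>\<^sup>2))"
      by (intro mult_left_mono Cauchy_Schwarz_ineq_sum) simp
    also have "\<dots> \<le> (g i)\<^sup>2 * (H * 1)"
      using x h_sum[OF F] H by (intro mult_left_mono mult_mono) (auto intro: sum_nonneg)
    finally show ?thesis by simp
  qed
  have "(\<Sum>i<N. (\<Sum>j\<in>F. M i j * x j)\<^sup>2) \<le> (\<Sum>i<N. (g i)\<^sup>2) * H"
    unfolding sum_distrib_right by (intro sum_mono row)
  also have "\<dots> \<le> G * H" using g_sum H by (intro mult_right_mono) auto
  finally show "y \<le> sqrt (G * H)" unfolding y by simp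
qed

text \<open>Row by row, \<open>(M' x)\<^sub>i\<^sup>2 \<le> (M x)\<^sub>i\<^sup>2 + (M x')\<^sub>i\<^sup>2\<close> with \<open>x'\<close> the restriction of \<open>x\<close> to \<open>P\<close>.\<close>

lemma l2_opnorm_row_masked_le:
  fixes M M' :: inf_mat
  assumes bdd: "bdd_above (l2_opnorm_set M)"
    and rows: "\<And>i. (\<forall>j. M' i j = M i j) \<or> (\<forall>j. M' i j = (if P j then M i j else 0))"
  shows "l2_opnorm M' \<le> sqrt 2 * l2_opnorm M"
  unfolding l2_opnorm_eq_Sup[of M']
proof (rule cSup_least)
  show "l2_opnorm_set M' \<noteq> {}" using zero_in_l2_opnorm_set by blast
next
  fix y assume "y \<in> l2_opnorm_set M'"
  then obtain N F x where y: "y = sqrt (\<Sum>i<N. (\<Sum>j\<in>F. M' i j * x j)\<^sup>2)"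
    and F: "finite F" and x: "(\<Sum>j\<in>F. (x j)\<^sup>2) \<le> 1" unfolding l2_opnorm_set_def by blast
  define x' where "x' j = (if P j then x j else 0)" for j
  have x': "(\<Sum>j\<in>F. (x' j)\<^sup>2) \<le> 1"
    using x by (rule order_trans[rotated]) (auto intro!: sum_mono simp: x'_def)
  have "(\<Sum>j\<in>F. M' i j * x j)\<^sup>2 \<le> (\<Sum>j\<in>F. M i j * x j)\<^sup>2 + (\<Sum>j\<in>F. M i j * x' j)\<^sup>2" for i
  proof (cases "\<forall>j. M' i j = M i j")
    case False
    then have "(\<Sum>j\<in>F. M' i j * x j) = (\<Sum>j\<in>F. M i j * x' j)"
      using rows[of i] unfolding x'_def by (intro sum.cong) auto
    then show ?thesis by simp
  qed simp
  then have "(\<Sum>i<N. (\<Sum>j\<in>F. M' i j * x j)\<^sup>2) \<le>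
      (\<Sum>i<N. (\<Sum>j\<in>F. M i j * x j)\<^sup>2) + (\<Sum>i<N. (\<Sum>j\<in>F. M i j * x' j)\<^sup>2)"
    unfolding sum.distrib[symmetric] by (intro sum_mono)
  also have "\<dots> \<le> 2 * (l2_opnorm M)\<^sup>2"
    by (rule order_trans[OF add_mono[OF partial_l2_norm_le_l2_opnorm[OF bdd F x]
          partial_l2_norm_le_l2_opnorm[OF bdd F x']]]) simp
  finally have "y \<le> sqrt (2 * (l2_opnorm M)\<^sup>2)" unfolding y by simp
  then show "y \<le> sqrt 2 * l2_opnorm M" using l2_opnorm_nonneg[OF bdd] by (simp add: real_sqrt_mult)
qed

lemma sum_power_div_lessThan:
  fixes q :: real
  shows "(\<Sum>i<N * p. q ^ (i div p)) = real p * (\<Sum>i<N. q ^ i)"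
proof -
  have "(\<Sum>i\<in>{k * p..<k * p + p}. q ^ (i div p)) = real p * q ^ k" for k
  proof -
    have "i div p = k" if "i \<in> {k * p..<k * p + p}" for i
      using that by (intro div_nat_eqI) (auto simp: mult.commute)
    then show ?thesis by simp
  qed
  then have "(\<Sum>k<N. \<Sum>i\<in>{k * p..<k * p + p}. q ^ (i div p)) = real p * (\<Sum>k<N. q ^ k)"
    by (simp add: sum_distrib_left)
  then show ?thesis by (simp only: sum.nat_group)
qed

lemma sum_power_div_le:
  fixes q :: real
  assumes "0 \<le> q" "q < 1" "0 < p" "finite F"
  shows "(\<Sum>i\<in>F. q ^ (i div p)) \<le> real p / (1 - q)"
proof -
  define N where "N = Suc (Max (insert 0 F))"
  have "F \<subseteq> {..<N}" using assms(4) by (auto simp: N_def less_Suc_eq_le)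
  also have "\<dots> \<subseteq> {..<N * p}" using assms(3) by simp
  finally have "F \<subseteq> {..<N * p}" .
  then have "(\<Sum>i\<in>F. q ^ (i div p)) \<le> (\<Sum>i<N * p. q ^ (i div p))"
    using assms(1) by (intro sum_mono2) auto
  also have "\<dots> = real p * ((1 - q ^ N) / (1 - q))"
    unfolding sum_power_div_lessThan using assms(2) by (simp add: sum_gp_strict)
  also have "\<dots> \<le> real p * (1 / (1 - q))"
    using assms(1,2) by (intro mult_left_mono divide_right_mono) auto
  finally show ?thesis by simp
qed

lemma abs_mult_mult_mat_entry_le:
  fixes C X B :: "real mat"
  assumes "C \<in> carrier_mat p n" "X \<in> carrier_mat n n" "B \<in> carrier_mat n m" "s < p" "t < m"
    and X: "\<And>a b. a < n \<Longrightarrow> b < n \<Longrightarrow> \<bar>X $$ (a, b)\<bar> \<le> K"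
  shows "\<bar>(C * X * B) $$ (s, t)\<bar> \<le> (\<Sum>a<n. \<bar>C $$ (s, a)\<bar>) * (\<Sum>b<n. \<bar>B $$ (b, t)\<bar>) * K"
proof -
  have "(C * X * B) $$ (s, t) = (\<Sum>b<n. (\<Sum>a<n. C $$ (s, a) * X $$ (a, b)) * B $$ (b, t))"
  proof -
    define D where "D = C * X"
    have "D \<in> carrier_mat p n" unfolding D_def using assms(1,2) by simp
    then have "(D * B) $$ (s, t) = (\<Sum>b<n. D $$ (s, b) * B $$ (b, t))"
      using assms(3-5) by (simp add: scalar_prod_def atLeast0LessThan)
    moreover have "D $$ (s, b) = (\<Sum>a<n. C $$ (s, a) * X $$ (a, b))" if "b < n" for b
      unfolding D_def using assms(1,2,4) that by (simp add: scalar_prod_def atLeast0LessThan)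
    ultimately show ?thesis unfolding D_def by simp
  qed
  then have "\<bar>(C * X * B) $$ (s, t)\<bar> \<le> (\<Sum>b<n. (\<Sum>a<n. \<bar>C $$ (s, a)\<bar> * K) * \<bar>B $$ (b, t)\<bar>)"
    using X by (auto intro!: order_trans[OF sum_abs] sum_mono mult_right_mono mult_left_mono simp: abs_mult)
  also have "\<dots> = (\<Sum>a<n. \<bar>C $$ (s, a)\<bar>) * (\<Sum>b<n. \<bar>B $$ (b, t)\<bar>) * K"
    by (simp only: sum_distrib_left[symmetric] sum_distrib_right[symmetric]) (simp only: mult_ac)
  finally show ?thesis .
qed

lemma block_hankel_infinite:
  "block_hankel C A B k None None r c =
    (if r mod dim_row C < dim_row C \<and> c mod dim_col B < dim_col B
     then (C * A ^\<^sub>m (k + r div dim_row C + c div dim_col B) * B) $$ (r mod dim_row C, c mod dim_col B)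
     else 0)"
  unfolding block_hankel_def Let_def by simp

lemma block_hankel_geometric_decay:
  fixes C A B :: "real mat"
  assumes C: "C \<in> carrier_mat p n" and A: "A \<in> carrier_mat n n" and B: "B \<in> carrier_mat n m"
    and radius: "spectral_radius (map_mat complex_of_real A) < 1"
  shows "\<exists>c r. 0 \<le> c \<and> 0 < r \<and> r < 1 \<and>
    (\<forall>i j. \<bar>block_hankel C A B k None None i j\<bar> \<le> c * r ^ (i div p) * r ^ (j div m))"
proof -
  obtain K r where K: "0 \<le> K" and r: "0 < r" "r < 1"
    and powers: "\<And>l. norm_bound (map_mat complex_of_real A ^\<^sub>m l) (K * r ^ l)"
    using spectral_radius_less_1_geometric_bound[of _ n, OF _ radius] A by auto
  have entry: "\<bar>(A ^\<^sub>m l) $$ (a, b)\<bar> \<le> K * r ^ l" if "a < n" "b < n" for l a b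
    using powers[of l] that A unfolding of_real_hom.mat_hom_pow[OF A, symmetric] norm_bound_def by auto
  define c where "c = (\<Sum>s<p. \<Sum>a<n. \<bar>C $$ (s, a)\<bar>) * (\<Sum>t<m. \<Sum>b<n. \<bar>B $$ (b, t)\<bar>) * K"
  have "\<bar>block_hankel C A B k None None i j\<bar> \<le> c * r ^ (i div p) * r ^ (j div m)" for i j
  proof (cases "i mod p < p \<and> j mod m < m")
    case True
    let ?l = "k + i div p + j div m"
    have "block_hankel C A B k None None i j = (C * A ^\<^sub>m ?l * B) $$ (i mod p, j mod m)"
      unfolding block_hankel_infinite using C B True by simp
    then have "\<bar>block_hankel C A B k None None i j\<bar> \<le>
        (\<Sum>a<n. \<bar>C $$ (i mod p, a)\<bar>) * (\<Sum>b<n. \<bar>B $$ (b, j mod m)\<bar>) * (K * r ^ ?l)"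
      using True entry by (auto intro!: abs_mult_mult_mat_entry_le[OF C pow_carrier_mat[OF A] B])
    also have "\<dots> \<le> (\<Sum>s<p. \<Sum>a<n. \<bar>C $$ (s, a)\<bar>) * (\<Sum>t<m. \<Sum>b<n. \<bar>B $$ (b, t)\<bar>) * (K * r ^ ?l)"
      using True K r by (intro mult_mono member_le_sum sum_nonneg mult_nonneg_nonneg) auto
    also have "\<dots> \<le> c * r ^ (i div p + j div m)"
      unfolding c_def using K r
      by (auto intro!: mult_left_mono mult_nonneg_nonneg power_decreasing sum_nonneg simp: mult.assoc)
    finally show ?thesis by (simp add: power_add mult.assoc)
  next
    case False
    then show ?thesis unfolding block_hankel_infinite using C B K r
      by (auto simp: c_def intro!: mult_nonneg_nonneg sum_nonneg)
  qed
  moreover have "0 \<le> c" unfolding c_def using K by (auto intro!: mult_nonneg_nonneg sum_nonneg)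
  ultimately show ?thesis using r by blast
qed

definition hankel_tail :: "real mat \<Rightarrow> real mat \<Rightarrow> real mat \<Rightarrow> nat \<Rightarrow> nat \<Rightarrow> inf_mat" where
  "hankel_tail C A B k d = (\<lambda>r c. block_hankel C A B k None None r c - block_hankel C A B k (Some d) (Some d) r c)"

lemma hankel_tail_eq:
  "hankel_tail C A B k d r c =
    (if r div dim_row C < d \<and> c div dim_col B < d then 0 else block_hankel C A B k None None r c)"
  unfolding hankel_tail_def block_hankel_def Let_def by simp

lemma bdd_above_l2_opnorm_set_hankel_tail:
  fixes C A B :: "real mat"
  assumes C: "C \<in> carrier_mat p n" and A: "A \<in> carrier_mat n n" and B: "B \<in> carrier_mat n m"
    and radius: "spectral_radius (map_mat complex_of_real A) < 1"
  shows "bdd_above (l2_opnorm_set (hankel_tail C A B k d))"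
proof (cases "p = 0 \<or> m = 0")
  case True
  then have "hankel_tail C A B k d i j = 0" for i j
    unfolding hankel_tail_eq block_hankel_infinite using C B by auto
  then show ?thesis
    by (intro bdd_above_l2_opnorm_set_rank_one_bound[of _ "\<lambda>_. 0" "\<lambda>_. 0"]) auto
next
  case False
  obtain c r where c: "0 \<le> c" and r: "0 < r" "r < 1"
    and decay: "\<And>i j. \<bar>block_hankel C A B k None None i j\<bar> \<le> c * r ^ (i div p) * r ^ (j div m)"
    using block_hankel_geometric_decay[OF C A B radius] by blast
  have r2: "r\<^sup>2 < 1" using power_strict_decreasing[of 0 2 r] r by simp
  have square: "(x ^ l)\<^sup>2 = (x\<^sup>2) ^ l" for x :: real and l
    by (metis power_mult mult.commute)
  have row_weights: "(\<Sum>i\<in>I. (c * r ^ (i div p))\<^sup>2) \<le> c\<^sup>2 * (real p / (1 - r\<^sup>2))" if "finite I" for I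
    unfolding power_mult_distrib square sum_distrib_left[symmetric]
    using sum_power_div_le[of "r\<^sup>2" p I] that False r r2 by (intro mult_left_mono) auto
  have column_weights: "(\<Sum>j\<in>J. (r ^ (j div m))\<^sup>2) \<le> real m / (1 - r\<^sup>2)" if "finite J" for J
    unfolding square using sum_power_div_le[of "r\<^sup>2" m J] that False r r2 by auto
  show ?thesis
  proof (rule bdd_above_l2_opnorm_set_rank_one_bound)
    show "\<bar>hankel_tail C A B k d i j\<bar> \<le> c * r ^ (i div p) * r ^ (j div m)" for i j
      unfolding hankel_tail_eq using decay[of i j] c r by auto
    show "(\<Sum>i<N. (c * r ^ (i div p))\<^sup>2) \<le> c\<^sup>2 * (real p / (1 - r\<^sup>2))" for N
      using row_weights by blast
  qed (use c r column_weights in auto)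
qed

lemma hankel_tail_rows:
  assumes "d2 \<le> d1"
  shows "(\<forall>j. hankel_tail C A B k d1 i j = hankel_tail C A B k d2 i j) \<or>
    (\<forall>j. hankel_tail C A B k d1 i j =
      (if d1 \<le> j div dim_col B then hankel_tail C A B k d2 i j else 0))"
  using assms unfolding hankel_tail_eq by auto

theorem proposition14:
  fixes C A B :: "real mat" and p n m d1 d2 :: nat
  assumes "C \<in> carrier_mat p n" and "A \<in> carrier_mat n n" and "B \<in> carrier_mat n m"
    and "spectral_radius (map_mat complex_of_real A) < 1"
    and "d1 \<ge> d2" and "d2 \<ge> 1"
  shows "l2_opnorm (\<lambda>r c. block_hankel C A B 0 None None r c - block_hankel C A B 0 (Some d1) (Some d1) r c)
         \<le> sqrt 2 * l2_opnorm (\<lambda>r c. block_hankel C A B 0 None None r c - block_hankel C A B 0 (Some d2) (Some d2) r c)"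
proof -
  have "l2_opnorm (hankel_tail C A B 0 d1) \<le> sqrt 2 * l2_opnorm (hankel_tail C A B 0 d2)"
    using bdd_above_l2_opnorm_set_hankel_tail[OF assms(1-4)] hankel_tail_rows[OF assms(5)]
    by (rule l2_opnorm_row_masked_le)
  then show ?thesis unfolding hankel_tail_def .
qed

end
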